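(* Assume the setting and algorithm described in the context, let Assumption A (restricted LP) and Assumption B (step-size) hold, and let the initial allocation vectors satisfy $\sum_{i=1}^N y_i^0 = b-r$. Then there exists a sufficiently large $M>0$ such that the allocation vector sequence $\{(y_1^t,\dots,y_N^t)\}_{t\ge 0}$ generated by the updates (P1)–(P2) satisfies: (i) $\sum_{i=1}^N y_i^t = b - r$ for all $t\ge 0$; (ii) $\lim_{t\to\infty}\|y_i^t - y_i^\star\| = 0$ for all $i\in\{1,\dots,N\}$, where $(y_1^\star,\dots,y_N^\star)$ is an optimal solution of the master problem (MP); (iii) every limit point $(z_1^\infty,\dots,z_N^\infty)$ of the primal sequence $\{(z_1^t,\dots,z_N^t)\}_{t\ge0}$ associated with $\{(y_1^t,\dots,y_N^t)\}_{t\ge 0}$ is an optimal solution of the restricted LP (LP$_r$), and $\sum_{i=1}^N c_i^\top z_i^\infty$ equals the optimal cost of (LP$_r$).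
   Context: Data: $N$ agents; for each $i\in\{1,\dots,N\}$, $c_i\in\mathbb{R}^{n_i}$, $A_i\in\mathbb{R}^{S\times n_i}$, and a nonempty compact mixed-integer polyhedral set $X_i=\{x_i\in\mathbb{Z}^{Z_i}\times\mathbb{R}^{R_i} : D_i x_i\preceq d_i\}$ with $Z_i+R_i=n_i$; $b\in\mathbb{R}^S$. Here $\preceq$ denotes componentwise inequality and $\mathbf 1$ the all-ones vector. $\mathrm{conv}(X_i)$ is the convex hull of $X_i$. A restriction vector $r\in\mathbb{R}^S$, $r\succeq 0$, is given. Restricted LP (LP$_r$): minimize $\sum_i c_i^\top z_i$ subject to $\sum_i A_i z_i\preceq b-r$, $z_i\in\mathrm{conv}(X_i)$ for all $i$. For $y_i\in\mathbb{R}^S$, $p_i(y_i)$ is the optimal value of: minimize $c_i^\top z_i$ subject to $A_i z_i\preceq y_i$, $z_i\in\mathrm{conv}(X_i)$; $Y_i$ is the set of $y_i$ for which this problem is feasible. Master problem (MP): minimize $\sum_i p_i(y_i)$ subject to $\sum_i y_i=b-r$, $y_i\in Y_i$. Assumption A: (LP$_r$) is feasible and its optimal solution is unique. Assumption B: the step-sizes $\alpha^t\ge0$ satisfy $\sum_t\alpha^t=\infty$, $\sum_t(\alpha^t)^2<\infty$. Network: agents communicate over a connected undirected graph with neighbor sets $\mathcal N_i$. Algorithm (with parameter $M>0$): at each $t\ge0$, agent $i$ computes a primal-dual optimal pair $((z_i^t,v_i^t),\mu_i^t)$ of the LP (P1): minimize $c_i^\top z_i + M v_i$ over $z_i\in\mathrm{conv}(X_i)$,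 $v_i\ge 0$, subject to $A_i z_i\preceq y_i^t+v_i\mathbf 1$, where $\mu_i^t\in\mathbb{R}^S$ is the Lagrange multiplier of this last constraint; then (P2): $y_i^{t+1}=y_i^t+\alpha^t\sum_{j\in\mathcal N_i}(\mu_i^t-\mu_j^t)$. *)

theory Defs
  imports "HOL-Analysis.Analysis"
begin

text \<open>Vectors over a common finite coordinate type (agents with fewer variables are
  modelled by padding with coordinates forced to zero by D, d).\<close>
definition mip_set :: "'n set \<Rightarrow> real^'n^'m \<Rightarrow> real^'m \<Rightarrow> (real^'n) set" where
  "mip_set Zc D d = {x. (\<forall>k\<in>Zc. x $ k \<in> \<int>) \<and> D *v x \<le> d}"

definition LPr_feasible ::
  "('i::finite \<Rightarrow> real^'n) \<Rightarrow> ('i \<Rightarrow> real^'n^'s) \<Rightarrow> ('i \<Rightarrow> (real^'n) set)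
   \<Rightarrow> real^'s \<Rightarrow> real^'s \<Rightarrow> ('i \<Rightarrow> real^'n) \<Rightarrow> bool" where
  "LPr_feasible c A X b r z \<longleftrightarrow>
     (\<Sum>i\<in>UNIV. A i *v z i) \<le> b - r \<and> (\<forall>i. z i \<in> convex hull (X i))"

definition LPr_cost :: "('i::finite \<Rightarrow> real^'n) \<Rightarrow> ('i \<Rightarrow> real^'n) \<Rightarrow> real" where
  "LPr_cost c z = (\<Sum>i\<in>UNIV. c i \<bullet> z i)"

definition LPr_optimal ::
  "('i::finite \<Rightarrow> real^'n) \<Rightarrow> ('i \<Rightarrow> real^'n^'s) \<Rightarrow> ('i \<Rightarrow> (real^'n) set)
   \<Rightarrow> real^'s \<Rightarrow> real^'s \<Rightarrow> ('i \<Rightarrow> real^'n) \<Rightarrow> bool" where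
  "LPr_optimal c A X b r z \<longleftrightarrow> LPr_feasible c A X b r z \<and>
     (\<forall>z'. LPr_feasible c A X b r z' \<longrightarrow> LPr_cost c z \<le> LPr_cost c z')"

definition LPr_value ::
  "('i::finite \<Rightarrow> real^'n) \<Rightarrow> ('i \<Rightarrow> real^'n^'s) \<Rightarrow> ('i \<Rightarrow> (real^'n) set)
   \<Rightarrow> real^'s \<Rightarrow> real^'s \<Rightarrow> real" where
  "LPr_value c A X b r = Inf (LPr_cost c ` {z. LPr_feasible c A X b r z})"

definition Ydom :: "real^'n^'s \<Rightarrow> (real^'n) set \<Rightarrow> (real^'s) set" where
  "Ydom Ai Xi = {y. \<exists>z\<in>convex hull Xi. Ai *v z \<le> y}"

definition pval :: "real^'n \<Rightarrow> real^'n^'s \<Rightarrow> (real^'n) set \<Rightarrow> real^'s \<Rightarrow> real" where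
  "pval ci Ai Xi y = Inf ((\<lambda>z. ci \<bullet> z) ` {z\<in>convex hull Xi. Ai *v z \<le> y})"

definition MP_feasible ::
  "('i::finite \<Rightarrow> real^'n^'s) \<Rightarrow> ('i \<Rightarrow> (real^'n) set) \<Rightarrow> real^'s \<Rightarrow> real^'s
   \<Rightarrow> ('i \<Rightarrow> real^'s) \<Rightarrow> bool" where
  "MP_feasible A X b r y \<longleftrightarrow> (\<Sum>i\<in>UNIV. y i) = b - r \<and> (\<forall>i. y i \<in> Ydom (A i) (X i))"

definition MP_optimal ::
  "('i::finite \<Rightarrow> real^'n) \<Rightarrow> ('i \<Rightarrow> real^'n^'s) \<Rightarrow> ('i \<Rightarrow> (real^'n) set)
   \<Rightarrow> real^'s \<Rightarrow> real^'s \<Rightarrow> ('i \<Rightarrow> real^'s) \<Rightarrow> bool" where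
  "MP_optimal c A X b r y \<longleftrightarrow> MP_feasible A X b r y \<and>
     (\<forall>y'. MP_feasible A X b r y' \<longrightarrow>
        (\<Sum>i\<in>UNIV. pval (c i) (A i) (X i) (y i)) \<le> (\<Sum>i\<in>UNIV. pval (c i) (A i) (X i) (y' i)))"

text \<open>Problem (P1) for agent i with allocation y and parameter M:
  minimize c^T z + M v over z in conv X, v >= 0, subject to A z <= y + v 1.
  Lagrangian w.r.t. the last constraint, multiplier mu.\<close>
definition P1_lagr :: "real^'n \<Rightarrow> real^'n^'s \<Rightarrow> real \<Rightarrow> real^'s
    \<Rightarrow> real^'n \<Rightarrow> real \<Rightarrow> real^'s \<Rightarrow> real" where
  "P1_lagr ci Ai M y z v mu = ci \<bullet> z + M * v + mu \<bullet> (Ai *v z - y - vec v)"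

definition P1_primal_dual_opt :: "real^'n \<Rightarrow> real^'n^'s \<Rightarrow> (real^'n) set \<Rightarrow> real \<Rightarrow> real^'s
    \<Rightarrow> real^'n \<Rightarrow> real \<Rightarrow> real^'s \<Rightarrow> bool" where
  "P1_primal_dual_opt ci Ai Xi M y z v mu \<longleftrightarrow>
     z \<in> convex hull Xi \<and> v \<ge> 0 \<and> Ai *v z \<le> y + vec v \<and> mu \<ge> 0 \<and>
     (\<forall>mu'. mu' \<ge> 0 \<longrightarrow> P1_lagr ci Ai M y z v mu' \<le> P1_lagr ci Ai M y z v mu) \<and>
     (\<forall>z' v'. z' \<in> convex hull Xi \<longrightarrow> v' \<ge> 0 \<longrightarrow>
        P1_lagr ci Ai M y z v mu \<le> P1_lagr ci Ai M y z' v' mu)"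

definition connected_undirected :: "('i \<Rightarrow> 'i set) \<Rightarrow> bool" where
  "connected_undirected Nb \<longleftrightarrow>
     (\<forall>i j. j \<in> Nb i \<longleftrightarrow> i \<in> Nb j) \<and> (\<forall>i. i \<notin> Nb i) \<and>
     (\<forall>i j. (i, j) \<in> {(a, b). b \<in> Nb a}\<^sup>*)"

end

theory Submission
  imports Defs
begin

(* Stack the allocations into Y(t) and the multipliers of (P1) into U(t). With the graph
   Laplacian L, update (P2) reads Y(t+1) = Y(t) + alpha_t L U(t), so the sum of the
   allocations is invariant and Y(t) = Y(0) + L W(t), where W(t) is the alpha-weighted sum
   of the past multipliers.

   If M exceeds an exact penalty parameter of the restricted LP by one, the penalized local
   costs F(t) = sum_i (c_i . z_i(t) + M v_i(t)) dominate the LP optimum p plus the total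
   slack, and the multipliers are subgradients of the local values: F(t) <= p - U(t) .
   (Y(t) - Y') for every allocation Y' that leaves room for an LP optimum. Choosing w' with
   L w' = Y' - Y(0), the potential (W(t) - w') . L (W(t) - w') therefore drops by
   2 alpha_t (F(t) - p) up to a term of order alpha_t^2. The step-size conditions yield a
   subsequence along which F(t) -> p; the allocations stay bounded, so they have a cluster
   point along it, which is again such a Y'. Relative to this Y' the potential vanishes
   along the subsequence and hence everywhere, which forces Y(t) -> Y'. Finally, limit
   points of the primal iterates are LP-feasible because the slack is at most F(t) - p,
   and optimal because their cost is at most lim F(t) = p. *)

section \<open>Graph Laplacian\<close>

definition laplacian :: "('i::finite \<Rightarrow> 'i set) \<Rightarrow> ('v::real_vector)^'i \<Rightarrow> 'v^'i" where
  "laplacian Nb w = (\<chi> i. \<Sum>j\<in>Nb i. w$i - w$j)"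

lemma laplacian_nth: "laplacian Nb w $ i = (\<Sum>j\<in>Nb i. w$i - w$j)"
  by (simp add: laplacian_def)

lemma linear_laplacian: "linear (laplacian Nb)"
  by (rule linearI)
    (auto simp: laplacian_def vec_eq_iff sum.distrib[symmetric] scaleR_sum_right algebra_simps)

lemma sum_neighbours_swap:
  fixes g :: "'i::finite \<Rightarrow> 'i \<Rightarrow> 'b::comm_monoid_add"
  assumes sym: "\<And>i j. j \<in> Nb i \<longleftrightarrow> i \<in> Nb j"
  shows "(\<Sum>i\<in>UNIV. \<Sum>j\<in>Nb i. g i j) = (\<Sum>i\<in>UNIV. \<Sum>j\<in>Nb i. g j i)"
proof -
  have "(\<Sum>i\<in>UNIV. \<Sum>j\<in>Nb i. g i j) = (\<Sum>i\<in>UNIV. \<Sum>j\<in>{j. j \<in> UNIV \<and> j \<in> Nb i}. g i j)"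
    by simp
  also have "\<dots> = (\<Sum>j\<in>UNIV. \<Sum>i\<in>{i. i \<in> UNIV \<and> j \<in> Nb i}. g i j)"
    by (rule sum.swap_restrict) auto
  also have "\<dots> = (\<Sum>j\<in>UNIV. \<Sum>i\<in>Nb j. g i j)"
    using sym by (intro sum.cong) auto
  finally show ?thesis .
qed

lemma sum_laplacian:
  fixes w :: "('v::real_vector)^'i::finite"
  assumes sym: "\<And>i j. j \<in> Nb i \<longleftrightarrow> i \<in> Nb j"
  shows "(\<Sum>i\<in>UNIV. laplacian Nb w $ i) = 0"
proof -
  have "(\<Sum>i\<in>UNIV. laplacian Nb w $ i) = (\<Sum>i\<in>UNIV. \<Sum>j\<in>Nb i. w$j - w$i)"
    unfolding laplacian_nth by (rule sum_neighbours_swap[OF sym])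
  also have "\<dots> = - (\<Sum>i\<in>UNIV. laplacian Nb w $ i)"
    by (simp add: laplacian_nth sum_negf[symmetric])
  finally have "2 *\<^sub>R (\<Sum>i\<in>UNIV. laplacian Nb w $ i) = 0"
    by (metis scaleR_2 add.right_inverse)
  then show ?thesis
    by simp
qed

lemma inner_laplacian:
  fixes u w :: "('v::real_inner)^'i::finite"
  assumes sym: "\<And>i j. j \<in> Nb i \<longleftrightarrow> i \<in> Nb j"
  shows "u \<bullet> laplacian Nb w = (\<Sum>i\<in>UNIV. \<Sum>j\<in>Nb i. (u$i - u$j) \<bullet> (w$i - w$j)) / 2"
proof -
  have "u \<bullet> laplacian Nb w = (\<Sum>i\<in>UNIV. \<Sum>j\<in>Nb i. u$i \<bullet> (w$i - w$j))"
    by (simp add: inner_vec_def laplacian_nth inner_sum_right)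
  moreover have "\<dots> = (\<Sum>i\<in>UNIV. \<Sum>j\<in>Nb i. - (u$j \<bullet> (w$i - w$j)))"
    by (subst sum_neighbours_swap[OF sym]) (simp add: inner_diff_right)
  ultimately have "2 * (u \<bullet> laplacian Nb w)
      = (\<Sum>i\<in>UNIV. \<Sum>j\<in>Nb i. u$i \<bullet> (w$i - w$j)) + (\<Sum>i\<in>UNIV. \<Sum>j\<in>Nb i. - (u$j \<bullet> (w$i - w$j)))"
    by linarith
  also have "\<dots> = (\<Sum>i\<in>UNIV. \<Sum>j\<in>Nb i. (u$i - u$j) \<bullet> (w$i - w$j))"
    by (simp add: sum.distrib[symmetric] inner_diff_left)
  finally show ?thesis
    by simp
qed

lemma inner_laplacian_commute:
  fixes u w :: "('v::real_inner)^'i::finite"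
  assumes sym: "\<And>i j. j \<in> Nb i \<longleftrightarrow> i \<in> Nb j"
  shows "u \<bullet> laplacian Nb w = w \<bullet> laplacian Nb u"
  unfolding inner_laplacian[OF sym] by (simp add: inner_commute)

lemma inner_laplacian_self:
  fixes w :: "('v::real_inner)^'i::finite"
  assumes sym: "\<And>i j. j \<in> Nb i \<longleftrightarrow> i \<in> Nb j"
  shows "w \<bullet> laplacian Nb w = (\<Sum>i\<in>UNIV. \<Sum>j\<in>Nb i. (norm (w$i - w$j))\<^sup>2) / 2"
  unfolding inner_laplacian[OF sym] by (simp add: power2_norm_eq_inner)

lemma inner_laplacian_self_nonneg:
  fixes w :: "('v::real_inner)^'i::finite"
  assumes sym: "\<And>i j. j \<in> Nb i \<longleftrightarrow> i \<in> Nb j"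
  shows "0 \<le> w \<bullet> laplacian Nb w"
  unfolding inner_laplacian_self[OF sym] by (auto intro!: sum_nonneg)

lemma connected_undirected_sym:
  "connected_undirected Nb \<Longrightarrow> j \<in> Nb i \<longleftrightarrow> i \<in> Nb j"
  by (auto simp: connected_undirected_def)

lemma laplacian_eq_0_imp_constant:
  fixes w :: "('v::real_inner)^'i::finite"
  assumes g: "connected_undirected Nb" and L: "laplacian Nb w = 0"
  shows "w$i = w$j"
proof -
  have "(\<Sum>i\<in>UNIV. \<Sum>j\<in>Nb i. (norm (w$i - w$j))\<^sup>2) = 0"
    using inner_laplacian_self[OF connected_undirected_sym[OF g], of w] L by simp
  then have edge: "w$a = w$b" if "b \<in> Nb a" for a b
    using that by (simp add: sum_nonneg_eq_0_iff sum_nonneg)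
  have "(i, j) \<in> {(a, b). b \<in> Nb a}\<^sup>*"
    using g unfolding connected_undirected_def by blast
  then show ?thesis
    by induction (auto dest: edge)
qed

definition zero_sum :: "(('v::real_vector)^'i::finite) set" where
  "zero_sum = {w. (\<Sum>i\<in>UNIV. w$i) = 0}"

lemma subspace_zero_sum: "subspace zero_sum"
  unfolding subspace_def zero_sum_def by (auto simp: sum.distrib scaleR_sum_right[symmetric])

lemma laplacian_in_zero_sum:
  assumes "connected_undirected Nb"
  shows "laplacian Nb w \<in> zero_sum"
  using sum_laplacian[OF connected_undirected_sym[OF assms]] by (simp add: zero_sum_def)

lemma laplacian_inj_on_zero_sum:
  fixes w :: "('v::euclidean_space)^'i::finite"
  assumes g: "connected_undirected Nb" and w: "w \<in> zero_sum" and L: "laplacian Nb w = 0"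
  shows "w = 0"
proof -
  obtain k where k: "\<And>i. w$i = w$k"
    using laplacian_eq_0_imp_constant[OF g L] by blast
  have "(\<Sum>i\<in>UNIV. w$i) = (\<Sum>i\<in>(UNIV::'i set). w$k)"
    by (rule sum.cong[OF refl k])
  then have "w$k = 0"
    using w by (simp add: zero_sum_def sum_constant_scaleR)
  then show ?thesis
    by (metis k vec_eq_iff zero_index)
qed

lemma laplacian_image_zero_sum:
  fixes Nb :: "'i::finite \<Rightarrow> 'i set"
  assumes g: "connected_undirected Nb"
  shows "laplacian Nb ` zero_sum = (zero_sum :: (('v::euclidean_space)^'i) set)"
proof (rule subspace_dim_equal)
  have inj: "inj_on (laplacian Nb) (zero_sum :: ('v^'i) set)"
  proof (rule inj_onI)
    fix x y :: "'v^'i"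
    assume "x \<in> zero_sum" "y \<in> zero_sum" "laplacian Nb x = laplacian Nb y"
    then have "x - y \<in> zero_sum" "laplacian Nb (x - y) = 0"
      using subspace_diff[OF subspace_zero_sum] by (auto simp: linear_diff[OF linear_laplacian])
    then show "x = y"
      using laplacian_inj_on_zero_sum[OF g, of "x - y"] by simp
  qed
  have span: "span zero_sum = (zero_sum :: ('v^'i) set)"
    using subspace_zero_sum by simp
  have "dim (laplacian Nb ` (zero_sum :: ('v^'i) set)) = dim (zero_sum :: ('v^'i) set)"
    by (intro dim_image_eq linear_laplacian) (simp only: span inj)
  then show "dim (zero_sum :: ('v^'i) set) \<le> dim (laplacian Nb ` (zero_sum :: ('v^'i) set))"
    by simp
qed (use laplacian_in_zero_sum[OF g] subspace_zero_sum
       linear_subspace_image[OF linear_laplacian subspace_zero_sum] in auto)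

lemma norm_laplacian_sq_le:
  fixes w :: "('v::real_inner)^'i::finite"
  assumes sym: "\<And>i j. j \<in> Nb i \<longleftrightarrow> i \<in> Nb j"
  shows "(norm (laplacian Nb w))\<^sup>2 \<le> 2 * CARD('i) * (w \<bullet> laplacian Nb w)"
proof -
  have "(norm (\<Sum>j\<in>Nb i. w$i - w$j))\<^sup>2 \<le> CARD('i) * (\<Sum>j\<in>Nb i. (norm (w$i - w$j))\<^sup>2)" for i
  proof -
    have "(norm (\<Sum>j\<in>Nb i. w$i - w$j))\<^sup>2 \<le> (\<Sum>j\<in>Nb i. norm (w$i - w$j))\<^sup>2"
      by (intro power_mono norm_sum) simp
    also have "\<dots> \<le> card (Nb i) * (\<Sum>j\<in>Nb i. (norm (w$i - w$j))\<^sup>2)"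
      using sum_squared_le_sum_of_squares by (simp add: mult.commute)
    also have "\<dots> \<le> CARD('i) * (\<Sum>j\<in>Nb i. (norm (w$i - w$j))\<^sup>2)"
      by (intro mult_right_mono) (auto intro: sum_nonneg card_mono)
    finally show ?thesis .
  qed
  then have "(\<Sum>i\<in>UNIV. (norm (laplacian Nb w $ i))\<^sup>2)
      \<le> (\<Sum>i\<in>UNIV. CARD('i) * (\<Sum>j\<in>Nb i. (norm (w$i - w$j))\<^sup>2))"
    unfolding laplacian_nth by (rule sum_mono)
  also have "\<dots> = 2 * CARD('i) * (w \<bullet> laplacian Nb w)"
    by (simp add: inner_laplacian_self[OF sym] sum_distrib_left sum_distrib_right mult_ac)
  finally show ?thesis
    by (simp add: norm_vec_def L2_set_def sum_nonneg)
qed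

lemma inner_laplacian_self_le_norm_laplacian:
  fixes Nb :: "'i::finite \<Rightarrow> 'i set"
  assumes g: "connected_undirected Nb"
  obtains C where "C > 0" "\<And>w::('v::euclidean_space)^'i. w \<bullet> laplacian Nb w \<le> C * (norm (laplacian Nb w))\<^sup>2"
proof -
  have "\<exists>e>0. \<forall>p\<in>zero_sum. e * norm p \<le> norm (laplacian Nb (p::'v^'i))"
    by (rule injective_imp_isometric)
      (auto simp: closed_subspace subspace_zero_sum linear_linear linear_laplacian
        laplacian_inj_on_zero_sum[OF g])
  then obtain e where e: "e > 0" "\<And>p. p \<in> zero_sum \<Longrightarrow> e * norm p \<le> norm (laplacian Nb (p::'v^'i))"
    by blast
  have "w \<bullet> laplacian Nb w \<le> (1/e) * (norm (laplacian Nb w))\<^sup>2" for w :: "'v^'i"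
  proof -
    obtain p where p: "p \<in> zero_sum" "laplacian Nb p = laplacian Nb w"
      using laplacian_image_zero_sum[OF g] laplacian_in_zero_sum[OF g, of w]
      by (metis imageE)
    have "w \<bullet> laplacian Nb w = p \<bullet> laplacian Nb w"
      by (metis p(2) inner_laplacian_commute[OF connected_undirected_sym[OF g]])
    also have "\<dots> \<le> norm p * norm (laplacian Nb w)"
      by (rule norm_cauchy_schwarz)
    also have "\<dots> \<le> ((1/e) * norm (laplacian Nb w)) * norm (laplacian Nb w)"
    proof (rule mult_right_mono)
      have "e * norm p \<le> norm (laplacian Nb w)"
        using e(2)[OF p(1)] p(2) by simp
      then show "norm p \<le> (1/e) * norm (laplacian Nb w)"
        using e(1) by (simp add: field_simps)
    qed simp
    finally show ?thesis
      by (simp add: power2_eq_square)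
  qed
  then show ?thesis
    using e(1) that[of "1/e"] by simp
qed

lemma inner_laplacian_self_le_norm:
  fixes w :: "('v::real_inner)^'i::finite"
  assumes sym: "\<And>i j. j \<in> Nb i \<longleftrightarrow> i \<in> Nb j"
  shows "w \<bullet> laplacian Nb w \<le> 2 * CARD('i) * (norm w)\<^sup>2"
proof -
  define q where "q = w \<bullet> laplacian Nb w"
  have "q * q \<le> (norm w * norm (laplacian Nb w))\<^sup>2"
    unfolding q_def power2_eq_square[symmetric]
    using norm_cauchy_schwarz inner_laplacian_self_nonneg[OF sym] by (intro power_mono) auto
  also have "\<dots> \<le> (norm w)\<^sup>2 * (2 * CARD('i) * q)"
    unfolding power_mult_distrib q_def by (intro mult_left_mono norm_laplacian_sq_le[OF sym]) simp
  finally have "q * q \<le> (2 * CARD('i) * (norm w)\<^sup>2) * q"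
    by (simp add: algebra_simps)
  moreover have "0 \<le> q"
    unfolding q_def by (rule inner_laplacian_self_nonneg[OF sym])
  ultimately show ?thesis
    unfolding q_def[symmetric] by (cases "q = 0") (auto simp: mult_le_cancel_right)
qed

section \<open>Sequences\<close>

lemma descent_summable:
  fixes a g \<alpha> :: "nat \<Rightarrow> real"
  assumes a_nonneg: "\<And>t. 0 \<le> a t" and gain_nonneg: "\<And>t. 0 \<le> \<alpha> t * g t"
    and step: "\<And>t. a (Suc t) \<le> a t - \<alpha> t * g t + G * (\<alpha> t)\<^sup>2"
    and sq: "summable (\<lambda>t. (\<alpha> t)\<^sup>2)" and G: "0 \<le> G"
  shows "summable (\<lambda>t. \<alpha> t * g t)" and "a t \<le> a 0 + G * (\<Sum>t. (\<alpha> t)\<^sup>2)"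
proof -
  have partial: "a T + (\<Sum>t<T. \<alpha> t * g t) \<le> a 0 + G * (\<Sum>t. (\<alpha> t)\<^sup>2)" for T
  proof -
    have "a T + (\<Sum>t<T. \<alpha> t * g t) \<le> a 0 + G * (\<Sum>t<T. (\<alpha> t)\<^sup>2)"
    proof (induction T)
      case (Suc T)
      then show ?case
        using step[of T] by (simp add: distrib_left)
    qed simp
    also have "\<dots> \<le> a 0 + G * (\<Sum>t. (\<alpha> t)\<^sup>2)"
      using sum_le_suminf[OF sq] G by (intro add_left_mono mult_left_mono) auto
    finally show ?thesis .
  qed
  show "summable (\<lambda>t. \<alpha> t * g t)"
  proof (rule summableI_nonneg_bounded)
    show "(\<Sum>t<T. \<alpha> t * g t) \<le> a 0 + G * (\<Sum>t. (\<alpha> t)\<^sup>2)" for T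
      using partial[of T] a_nonneg[of T] by linarith
  qed (rule gain_nonneg)
  have "0 \<le> (\<Sum>s<t. \<alpha> s * g s)"
    by (intro sum_nonneg gain_nonneg)
  then show "a t \<le> a 0 + G * (\<Sum>t. (\<alpha> t)\<^sup>2)"
    using partial[of t] by linarith
qed

lemma weighted_summable_imp_subseq_tendsto_0:
  fixes \<alpha> g :: "nat \<Rightarrow> real"
  assumes \<alpha>_nonneg: "\<And>t. 0 \<le> \<alpha> t" and not_summable: "\<not> summable \<alpha>"
    and summable: "summable (\<lambda>t. \<alpha> t * g t)" and g_nonneg: "\<And>t. 0 \<le> g t"
  obtains \<tau> where "strict_mono \<tau>" "(\<lambda>k. g (\<tau> k)) \<longlonglongrightarrow> 0"
proof -
  have small: "\<exists>t>T. g t < \<epsilon>" if "\<epsilon> > 0" for \<epsilon> T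
  proof (rule ccontr)
    assume "\<not> ?thesis"
    then have "\<alpha> t * \<epsilon> \<le> \<alpha> t * g t" if "t > T" for t
      using that \<alpha>_nonneg[of t] by (intro mult_left_mono) auto
    then have le: "\<alpha> t \<le> \<alpha> t * g t / \<epsilon>" if "t > T" for t
      using that \<open>\<epsilon> > 0\<close> by (simp add: field_simps)
    have "summable (\<lambda>t. \<alpha> t * g t / \<epsilon>)"
      using summable by (rule summable_divide)
    then have "summable \<alpha>"
      by (rule summable_comparison_test'[where N = "Suc T"]) (use le \<alpha>_nonneg in auto)
    then show False
      using not_summable by blast
  qed
  have "\<exists>\<tau>. \<forall>k. g (\<tau> k) < 1 / real (Suc k) \<and> \<tau> k < \<tau> (Suc k)"
  proof (rule dependent_nat_choice)
    show "\<exists>t. g t < 1 / real (Suc 0)"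
      using small[of 1 0] by auto
    show "\<exists>t'. g t' < 1 / real (Suc (Suc k)) \<and> t < t'" for t k
      using small[of "1 / real (Suc (Suc k))" t] by auto
  qed
  then obtain \<tau> where \<tau>: "\<And>k. g (\<tau> k) < 1 / real (Suc k)" "\<And>k. \<tau> k < \<tau> (Suc k)"
    by blast
  have "(\<lambda>k. g (\<tau> k)) \<longlonglongrightarrow> 0"
  proof (rule tendsto_sandwich[of "\<lambda>_. 0" _ _ "\<lambda>k. 1 / real (Suc k)"])
    show "\<forall>\<^sub>F k in sequentially. 0 \<le> g (\<tau> k)"
      using g_nonneg by simp
    show "\<forall>\<^sub>F k in sequentially. g (\<tau> k) \<le> 1 / real (Suc k)"
      using \<tau>(1) by (simp add: order_less_imp_le)
    show "(\<lambda>k. 1 / real (Suc k)) \<longlonglongrightarrow> 0"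
      using LIMSEQ_inverse_real_of_nat by (simp add: inverse_eq_divide)
  qed simp
  moreover have "strict_mono \<tau>"
    using \<tau>(2) by (simp add: strict_mono_Suc_iff)
  ultimately show ?thesis
    using that by blast
qed

lemma tendsto_0_if_subseq_and_summable_increments:
  fixes a b :: "nat \<Rightarrow> real"
  assumes a_nonneg: "\<And>t. 0 \<le> a t" and step: "\<And>t. a (Suc t) \<le> a t + b t"
    and b_nonneg: "\<And>t. 0 \<le> b t" and summable: "summable b"
    and \<sigma>: "strict_mono \<sigma>" and sub: "(\<lambda>k. a (\<sigma> k)) \<longlonglongrightarrow> 0"
  shows "a \<longlonglongrightarrow> 0"
proof -
  \<comment> \<open>a plus the remaining increments is nonincreasing, hence convergent, and the
     subsequence pins its limit to 0\<close>
  define c where "c t = a t + (suminf b - (\<Sum>k<t. b k))" for t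
  have tail: "(\<lambda>t. suminf b - (\<Sum>k<t. b k)) \<longlonglongrightarrow> 0"
    using tendsto_diff[OF tendsto_const[of "suminf b"] summable_LIMSEQ[OF summable]] by simp
  have tail_nonneg: "0 \<le> suminf b - (\<Sum>k<t. b k)" for t
    using sum_le_suminf[OF summable, of "{..<t}"] b_nonneg by simp
  have dec: "decseq c"
  proof (rule decseq_SucI)
    show "c (Suc t) \<le> c t" for t
      using step[of t] by (simp add: c_def)
  qed
  have "\<forall>t. 0 \<le> c t"
    using a_nonneg tail_nonneg by (simp add: c_def add_nonneg_nonneg)
  then obtain L where L: "c \<longlonglongrightarrow> L"
    using decseq_convergent[OF dec] by blast
  have sub_c: "(\<lambda>k. c (\<sigma> k)) \<longlonglongrightarrow> 0"
    unfolding c_def using tendsto_add[OF sub LIMSEQ_subseq_LIMSEQ[OF tail \<sigma>]] by (simp add: o_def)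
  have "(\<lambda>k. c (\<sigma> k)) \<longlonglongrightarrow> L"
    using LIMSEQ_subseq_LIMSEQ[OF L \<sigma>] by (simp add: o_def)
  then have "L = 0"
    using sub_c by (rule LIMSEQ_unique)
  then have "c \<longlonglongrightarrow> 0"
    using L by simp
  moreover have "a t \<le> c t" for t
    using tail_nonneg[of t] by (simp add: c_def)
  ultimately show ?thesis
    using a_nonneg by (intro tendsto_sandwich[of "\<lambda>_. 0" a sequentially c]) auto
qed

section \<open>Polytopes\<close>

lemma polyhedron_linear_vimage:
  fixes f :: "'a::euclidean_space \<Rightarrow> 'b::euclidean_space"
  assumes P: "polyhedron T" and f: "linear f"
  shows "polyhedron (f -` T)"
proof -
  obtain F where F: "finite F" "T = \<Inter>F" "\<And>h. h \<in> F \<Longrightarrow> \<exists>a b. a \<noteq> 0 \<and> h = {x. a \<bullet> x \<le> b}"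
    using P unfolding polyhedron_def by blast
  have "polyhedron (f -` h)" if h: "h \<in> F" for h
  proof -
    obtain a b where "h = {x. a \<bullet> x \<le> b}"
      using F(3)[OF h] by blast
    then have "f -` h = {x. adjoint f a \<bullet> x \<le> b}"
      using adjoint_works[OF f] by (auto simp: inner_commute)
    then show ?thesis
      by (simp add: polyhedron_halfspace_le)
  qed
  moreover have "f -` T = \<Inter>((\<lambda>h. f -` h) ` F)"
    using F(2) by auto
  ultimately show ?thesis
    using F(1) by (auto intro: polyhedron_Inter)
qed

lemma polyhedron_vec_le: "polyhedron {u::real^'m::finite. u \<le> d}"
proof -
  have "{u::real^'m. u \<le> d} = (\<Inter>j. {u. axis j 1 \<bullet> u \<le> d$j})"
    by (auto simp: less_eq_vec_def inner_axis')
  then show ?thesis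
    by (auto intro!: polyhedron_Inter simp: polyhedron_halfspace_le)
qed

lemma closed_vec_le: "closed {u::real^'m::finite. u \<le> d}"
  by (rule polyhedron_imp_closed[OF polyhedron_vec_le])

lemma finite_bounded_integral_vectors:
  fixes S :: "(real^'n::finite) set"
  assumes "bounded S" and "\<And>x k. x \<in> S \<Longrightarrow> x$k \<in> \<int>"
  shows "finite S"
proof -
  obtain B where B: "\<And>x. x \<in> S \<Longrightarrow> norm x \<le> B"
    using assms(1) bounded_iff by blast
  define I where "I = {k \<in> \<int>. \<bar>k\<bar> \<le> B}"
  have "S \<subseteq> (\<lambda>f. \<chi> k. f k) ` (UNIV \<rightarrow>\<^sub>E I)"
  proof
    fix x assume "x \<in> S"
    then have "x$k \<in> I" for k
      using assms(2) B component_le_norm_cart[of x k] by (force simp: I_def)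
    then show "x \<in> (\<lambda>f. \<chi> k. f k) ` (UNIV \<rightarrow>\<^sub>E I)"
      by (intro image_eqI[of _ _ "\<lambda>k. x$k"]) auto
  qed
  moreover have "finite ((UNIV::'n set) \<rightarrow>\<^sub>E I)"
    unfolding I_def by (intro finite_PiE finite_abs_int_segment) auto
  ultimately show ?thesis
    by (rule finite_subset[OF _ finite_imageI])
qed

lemma convex_hull_UN_convex_hull:
  "convex hull (\<Union>a\<in>P. convex hull (V a)) = convex hull (\<Union>a\<in>P. V a)"
proof
  show "convex hull (\<Union>a\<in>P. convex hull V a) \<subseteq> convex hull (\<Union>a\<in>P. V a)"
    by (rule hull_minimal) (auto intro: hull_mono[THEN subsetD])
  show "convex hull (\<Union>a\<in>P. V a) \<subseteq> convex hull (\<Union>a\<in>P. convex hull V a)"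
    by (rule hull_mono) (auto intro: hull_inc)
qed

lemma polytope_convex_hull_UN:
  assumes "finite P" and "\<And>a. a \<in> P \<Longrightarrow> polytope (S a)"
  shows "polytope (convex hull (\<Union>a\<in>P. S a))"
proof -
  obtain V where V: "\<And>a. a \<in> P \<Longrightarrow> finite (V a) \<and> S a = convex hull (V a)"
    using assms(2) unfolding polytope_def by metis
  then have "convex hull (\<Union>a\<in>P. S a) = convex hull (\<Union>a\<in>P. V a)"
    by (simp add: convex_hull_UN_convex_hull)
  then show ?thesis
    using V assms(1) by (simp add: polytope_convex_hull)
qed

text \<open>Fixing the integer coordinates slices the mixed-integer set into finitely many
  bounded polyhedra, one for each integer pattern.\<close>
lemma polytope_convex_hull_mip_set:
  fixes D :: "real^'n::finite^'m::finite"
  assumes X: "compact (mip_set Zc D d)"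
  shows "polytope (convex hull (mip_set Zc D d))"
proof -
  define X where "X = mip_set Zc D d"
  define pat where "pat x = (\<chi> k. if k \<in> Zc then x$k else 0)" for x :: "real^'n"
  define slice where "slice a = X \<inter> pat -` {a}" for a
  have linear_pat: "linear pat"
    by (rule linearI) (auto simp: pat_def vec_eq_iff)
  have fin: "finite (pat ` X)"
  proof (rule finite_bounded_integral_vectors)
    show "bounded (pat ` X)"
      using X unfolding X_def
      by (intro compact_imp_bounded compact_continuous_image linear_continuous_on
          linear_conv_bounded_linear[THEN iffD1, OF linear_pat])
    show "x$k \<in> \<int>" if "x \<in> pat ` X" for x k
      using that by (auto simp: pat_def X_def mip_set_def)
  qed
  have slices: "polytope (slice a)" if a: "a \<in> pat ` X" for a
  proof -
    obtain x0 where x0: "x0 \<in> X" "a = pat x0"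
      using a by blast
    have "x \<in> X" if x: "D *v x \<le> d" "pat x = pat x0" for x
    proof -
      have "x$k = x0$k" if "k \<in> Zc" for k
        using arg_cong[OF x(2), of "\<lambda>v. v$k"] that by (simp add: pat_def)
      then show ?thesis
        using x0(1) x(1) by (auto simp: X_def mip_set_def)
    qed
    then have "slice a = {x. D *v x \<le> d} \<inter> pat -` {a}"
      using x0 by (auto simp: slice_def X_def mip_set_def)
    also have "polyhedron \<dots>"
    proof (rule polyhedron_Int)
      show "polyhedron {x. D *v x \<le> d}"
        using polyhedron_linear_vimage[OF polyhedron_vec_le matrix_vector_mul_linear]
        by (simp add: vimage_def)
      show "polyhedron (pat -` {a})"
        by (rule polyhedron_linear_vimage[OF polytope_imp_polyhedron[OF polytope_sing] linear_pat])
    qed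
    finally have "polyhedron (slice a)" .
    moreover have "bounded (slice a)"
      using compact_imp_bounded[OF X] by (rule bounded_subset) (auto simp: slice_def X_def)
    ultimately show ?thesis
      by (simp add: polytope_eq_bounded_polyhedron)
  qed
  have X_eq: "X = (\<Union>a\<in>pat ` X. slice a)"
    by (auto simp: slice_def)
  have "polytope (convex hull (\<Union>a\<in>pat ` X. slice a))"
    by (rule polytope_convex_hull_UN[OF fin]) (rule slices)
  then show ?thesis
    by (metis X_eq X_def)
qed

lemma norm_vec_le_sum: "norm (x::('a::real_normed_vector)^'i::finite) \<le> (\<Sum>i\<in>UNIV. norm (x$i))"
  by (simp add: norm_vec_def L2_set_le_sum)

lemma bounded_vec_Pi:
  fixes K :: "'i::finite \<Rightarrow> ('a::real_normed_vector) set"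
  assumes "\<And>i. bounded (K i)"
  shows "bounded {Z::'a^'i. \<forall>i. Z$i \<in> K i}"
proof -
  have "\<forall>i. \<exists>b. \<forall>x\<in>K i. norm x \<le> b"
    using assms by (simp add: bounded_iff)
  from choice[OF this] obtain B where B: "\<And>i x. x \<in> K i \<Longrightarrow> norm x \<le> B i"
    by blast
  show ?thesis
    unfolding bounded_iff
    by (intro exI[of _ "\<Sum>i\<in>UNIV. B i"]) (auto intro!: order_trans[OF norm_vec_le_sum] sum_mono B)
qed

lemma polytope_vec_Pi:
  fixes K :: "'i::finite \<Rightarrow> (real^'n::finite) set"
  assumes P: "\<And>i. polytope (K i)"
  shows "polytope {Z::(real^'n)^'i. \<forall>i. Z$i \<in> K i}"
proof -
  have "{Z::(real^'n)^'i. \<forall>i. Z$i \<in> K i} = (\<Inter>i. (\<lambda>Z. Z$i) -` K i)"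
    by auto
  moreover have "polyhedron ((\<lambda>Z::(real^'n)^'i. Z$i) -` K i)" for i
    by (rule polyhedron_linear_vimage[OF polytope_imp_polyhedron[OF P]
          bounded_linear.linear[OF bounded_linear_vec_nth]])
  moreover have "bounded {Z::(real^'n)^'i. \<forall>i. Z$i \<in> K i}"
    using P by (intro bounded_vec_Pi polytope_imp_bounded)
  ultimately show ?thesis
    by (auto simp: polytope_eq_bounded_polyhedron intro: polyhedron_Inter)
qed

section \<open>Exact penalty\<close>

lemma polytope_penalty_bound:
  fixes P :: "('a::euclidean_space \<times> real) set"
  assumes P: "polytope P" and nonneg: "\<And>x V. (x, V) \<in> P \<Longrightarrow> 0 \<le> V"
    and slice: "\<And>x. (x, 0) \<in> P \<Longrightarrow> p \<le> c \<bullet> x"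
  obtains \<Lambda> where "\<And>x V. (x, V) \<in> P \<Longrightarrow> p \<le> c \<bullet> x + \<Lambda> * V"
proof -
  obtain E where E: "finite E" "P = convex hull E"
    using P unfolding polytope_def by blast
  \<comment> \<open>at vertices with V = 0 the summand is a junk division by 0, and the slice bound holds\<close>
  define \<Lambda> where "\<Lambda> = (\<Sum>e\<in>E. \<bar>p - c \<bullet> fst e\<bar> / snd e)"
  have E_nonneg: "0 \<le> snd e" if "e \<in> E" for e
    using nonneg[of "fst e" "snd e"] hull_inc[OF that] E(2) by simp
  have "p \<le> (c, \<Lambda>) \<bullet> e" if e: "e \<in> E" for e
  proof (cases "snd e = 0")
    case True
    then show ?thesis
      using slice[of "fst e"] hull_inc[OF e] E(2) by (cases e) (simp add: inner_prod_def)
  next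
    case False
    then have pos: "0 < snd e"
      using E_nonneg[OF e] by simp
    have "\<bar>p - c \<bullet> fst e\<bar> / snd e \<le> \<Lambda>"
      unfolding \<Lambda>_def using E(1) e E_nonneg by (intro member_le_sum) auto
    then have "\<bar>p - c \<bullet> fst e\<bar> \<le> \<Lambda> * snd e"
      using pos by (simp add: field_simps)
    then show ?thesis
      by (simp add: inner_prod_def)
  qed
  then have "P \<subseteq> {e. p \<le> (c, \<Lambda>) \<bullet> e}"
    unfolding E(2) by (intro hull_minimal convex_halfspace_ge) auto
  then show ?thesis
    by (intro that[of \<Lambda>]) (auto simp: inner_prod_def)
qed

lemma exact_penalty_polytope:
  fixes K :: "'a::euclidean_space set" and G :: "'a \<Rightarrow> real^'s::finite"
  assumes K: "polytope K" and G: "linear G"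
    and opt: "\<And>x. x \<in> K \<Longrightarrow> G x \<le> h \<Longrightarrow> p \<le> c \<bullet> x"
  obtains \<Lambda> where "0 \<le> \<Lambda>"
    "\<And>x V. x \<in> K \<Longrightarrow> 0 \<le> V \<Longrightarrow> G x \<le> h + vec V \<Longrightarrow> p - \<Lambda> * V \<le> c \<bullet> x"
proof -
  define P where "P = (K \<times> cbox 0 1) \<inter> (\<lambda>(x, V). G x - vec V) -` {u. u \<le> h}"
  have "linear (\<lambda>(x, V). G x - vec V :: real^'s)"
    by (rule linearI) (auto simp: linear_add[OF G] linear_scale[OF G] vec_add vec_scaleR scaleR_diff_right)
  then have P: "polytope P"
    unfolding P_def
    by (intro polytope_Int_polyhedron polytope_Times K polytope_interval
        polyhedron_linear_vimage polyhedron_vec_le)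
  obtain \<Lambda>1 where \<Lambda>1: "\<And>x V. (x, V) \<in> P \<Longrightarrow> p \<le> c \<bullet> x + \<Lambda>1 * V"
  proof (rule polytope_penalty_bound[OF P])
    show "0 \<le> V" if "(x, V) \<in> P" for x V
      using that by (simp add: P_def)
    show "p \<le> c \<bullet> x" if "(x, 0) \<in> P" for x
      using that opt by (simp add: P_def)
  qed blast
  \<comment> \<open>for V > 1 a lower bound of c on the bounded set K pays for the violation\<close>
  obtain B where B: "\<And>x. x \<in> K \<Longrightarrow> norm x \<le> B"
    using polytope_imp_bounded[OF K] bounded_iff by blast
  define \<Lambda> where "\<Lambda> = max \<Lambda>1 (max 0 (p + norm c * B))"
  have "p - \<Lambda> * V \<le> c \<bullet> x" if x: "x \<in> K" and V: "0 \<le> V" and viol: "G x \<le> h + vec V" for x V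
  proof (cases "V \<le> 1")
    case True
    have "G x - vec V \<le> h"
      using viol by (simp add: less_eq_vec_def algebra_simps)
    then have "p \<le> c \<bullet> x + \<Lambda>1 * V"
      using True x V by (intro \<Lambda>1) (simp add: P_def)
    moreover have "\<Lambda>1 * V \<le> \<Lambda> * V"
      using V by (intro mult_right_mono) (auto simp: \<Lambda>_def)
    ultimately show ?thesis
      by linarith
  next
    case False
    have "- (norm c * B) \<le> c \<bullet> x"
      using Cauchy_Schwarz_ineq2[of c x] mult_left_mono[OF B[OF x], of "norm c"] by simp
    moreover have "\<Lambda> \<le> \<Lambda> * V"
      using False mult_left_mono[of 1 V \<Lambda>] by (simp add: \<Lambda>_def)
    ultimately show ?thesis
      by (simp add: \<Lambda>_def)
  qed
  then show ?thesis
    by (intro that[of \<Lambda>]) (auto simp: \<Lambda>_def)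
qed

lemma LPr_cost_eq_inner: "LPr_cost c z = (\<chi> i. c i) \<bullet> (\<chi> i. z i)"
  by (simp add: LPr_cost_def inner_vec_def)

lemma LPr_exact_penalty:
  fixes c :: "'i::finite \<Rightarrow> real^'n::finite" and A :: "'i \<Rightarrow> real^'n^'s::finite"
  assumes polytope: "\<And>i. polytope (convex hull X i)" and opt: "LPr_optimal c A X b r zo"
  obtains \<Lambda> where "0 \<le> \<Lambda>"
    "\<And>z V. (\<forall>i. z i \<in> convex hull X i) \<Longrightarrow> 0 \<le> V \<Longrightarrow> (\<Sum>i\<in>UNIV. A i *v z i) \<le> b - r + vec V
       \<Longrightarrow> LPr_cost c zo - \<Lambda> * V \<le> LPr_cost c z"
proof -
  define K where "K = {Z::(real^'n)^'i. \<forall>i. Z$i \<in> convex hull X i}"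
  define G where "G Z = (\<Sum>i\<in>UNIV. A i *v Z$i)" for Z :: "(real^'n)^'i"
  have G: "linear G"
    by (rule linearI)
      (simp_all add: G_def matrix_vector_right_distrib sum.distrib scaleR_sum_right matrix_vector_mult_scaleR)
  have feasible: "LPr_cost c zo \<le> (\<chi> i. c i) \<bullet> Z" if "Z \<in> K" "G Z \<le> b - r" for Z
  proof -
    have "LPr_feasible c A X b r (\<lambda>i. Z$i)"
      using that by (simp add: LPr_feasible_def K_def G_def)
    then have "LPr_cost c zo \<le> LPr_cost c (\<lambda>i. Z$i)"
      using opt by (simp add: LPr_optimal_def)
    then show ?thesis
      by (simp add: LPr_cost_eq_inner)
  qed
  obtain \<Lambda> where "0 \<le> \<Lambda>" and \<Lambda>: "\<And>Z V. Z \<in> K \<Longrightarrow> 0 \<le> V \<Longrightarrow> G Z \<le> b - r + vec V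
      \<Longrightarrow> LPr_cost c zo - \<Lambda> * V \<le> (\<chi> i. c i) \<bullet> Z"
  proof (rule exact_penalty_polytope[where h = "b - r", OF _ G feasible])
    show "polytope K"
      unfolding K_def by (rule polytope_vec_Pi[OF polytope])
  qed blast+
  moreover have "LPr_cost c zo - \<Lambda> * V \<le> LPr_cost c z"
    if "\<forall>i. z i \<in> convex hull X i" "0 \<le> V" "(\<Sum>i\<in>UNIV. A i *v z i) \<le> b - r + vec V" for z V
    using \<Lambda>[of "\<chi> i. z i" V] that by (simp add: K_def G_def LPr_cost_eq_inner)
  ultimately show ?thesis
    using that by blast
qed

section \<open>Local problems\<close>

lemma P1_multiplier_norm_le:
  assumes "P1_primal_dual_opt ci Ai Xi M y z v mu"
  shows "norm mu \<le> M"
proof -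
  from assms have mu: "0 \<le> mu"
    and "P1_lagr ci Ai M y z v mu \<le> P1_lagr ci Ai M y z (v + 1) mu"
    unfolding P1_primal_dual_opt_def by auto
  \<comment> \<open>raising the slack v by one costs M and relaxes the coupling constraint by mu \<bullet> 1\<close>
  moreover have "P1_lagr ci Ai M y z (v + 1) mu = P1_lagr ci Ai M y z v mu + M - mu \<bullet> vec 1"
    by (simp add: P1_lagr_def vec_add inner_add_right inner_diff_right algebra_simps)
  ultimately have "(\<Sum>s\<in>UNIV. mu$s) \<le> M"
    by (simp add: inner_vec_def)
  moreover have "norm mu \<le> (\<Sum>s\<in>UNIV. mu$s)"
    using norm_le_l1_cart[of mu] mu by (simp add: less_eq_vec_def)
  ultimately show ?thesis
    by simp
qed

lemma P1_subgradient:
  assumes opt: "P1_primal_dual_opt ci Ai Xi M y z v mu"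
    and z': "z' \<in> convex hull Xi" and v': "0 \<le> v'" and feasible: "Ai *v z' \<le> y' + vec v'"
  shows "ci \<bullet> z + M * v \<le> ci \<bullet> z' + M * v' + mu \<bullet> (y' - y)"
proof -
  from opt have mu: "0 \<le> mu"
    and upper: "P1_lagr ci Ai M y z v 0 \<le> P1_lagr ci Ai M y z v mu"
    and lower: "P1_lagr ci Ai M y z v mu \<le> P1_lagr ci Ai M y z' v' mu"
    unfolding P1_primal_dual_opt_def using z' v' by auto
  have "Ai *v z' - y' - vec v' \<le> 0"
    using feasible by (simp add: less_eq_vec_def algebra_simps)
  then have "mu \<bullet> (Ai *v z' - y' - vec v') \<le> 0"
    using mu unfolding inner_vec_def less_eq_vec_def by (auto intro!: sum_nonpos mult_nonneg_nonpos)
  moreover have "P1_lagr ci Ai M y z' v' mu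
      = ci \<bullet> z' + M * v' + mu \<bullet> (Ai *v z' - y' - vec v') + mu \<bullet> (y' - y)"
    by (simp add: P1_lagr_def inner_diff_right)
  ultimately show ?thesis
    using upper lower by (simp add: P1_lagr_def)
qed

lemma bdd_below_inner_image:
  assumes "bounded K" and "S \<subseteq> K"
  shows "bdd_below ((\<lambda>z. c \<bullet> z) ` S)"
  using bounded_subset[OF assms] bounded_linear_inner_right
  by (intro bounded_imp_bdd_below bounded_linear_image)

lemma pval_le:
  assumes K: "compact (convex hull Xi)" and z: "z \<in> convex hull Xi" and feasible: "Ai *v z \<le> y"
  shows "pval ci Ai Xi y \<le> ci \<bullet> z"
  unfolding pval_def
proof (rule cInf_lower)
  show "ci \<bullet> z \<in> (\<lambda>z. ci \<bullet> z) ` {z \<in> convex hull Xi. Ai *v z \<le> y}"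
    using z feasible by blast
  show "bdd_below ((\<lambda>z. ci \<bullet> z) ` {z \<in> convex hull Xi. Ai *v z \<le> y})"
    by (rule bdd_below_inner_image[OF compact_imp_bounded[OF K]]) auto
qed

lemma pval_attained:
  fixes Ai :: "real^'n::finite^'s::finite"
  assumes K: "compact (convex hull Xi)" and y: "y \<in> Ydom Ai Xi"
  obtains z where "z \<in> convex hull Xi" "Ai *v z \<le> y" "pval ci Ai Xi y = ci \<bullet> z"
proof -
  define S where "S = {z \<in> convex hull Xi. Ai *v z \<le> y}"
  have "closed ((*v) Ai -` {u. u \<le> y})"
    by (intro polyhedron_imp_closed polyhedron_linear_vimage polyhedron_vec_le matrix_vector_mul_linear)
  then have "compact S"
    using compact_Int_closed[OF K] by (simp add: S_def vimage_def Collect_conj_eq)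
  moreover have "S \<noteq> {}"
    using y by (auto simp: Ydom_def S_def)
  moreover have "continuous_on S (\<lambda>w. ci \<bullet> w)"
    by (intro continuous_intros)
  ultimately obtain z where z: "z \<in> S" "\<And>w. w \<in> S \<Longrightarrow> ci \<bullet> z \<le> ci \<bullet> w"
    by (metis continuous_attains_inf)
  then have "pval ci Ai Xi y = ci \<bullet> z"
    unfolding pval_def S_def[symmetric] by (intro cInf_eq_minimum) blast+
  then show ?thesis
    using z(1) that unfolding S_def by blast
qed

lemma LPr_value_eq:
  assumes "LPr_optimal c A X b r z"
  shows "LPr_value c A X b r = LPr_cost c z"
  unfolding LPr_value_def using assms by (intro cInf_eq_minimum) (auto simp: LPr_optimal_def)

text \<open>The master problem is the restricted LP with the coupling constraint split among
  the agents.\<close>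
lemma MP_optimal_if_covers_LPr_optimum:
  assumes K: "\<And>i. compact (convex hull X i)" and opt: "LPr_optimal c A X b r zh"
    and sum_y: "(\<Sum>i\<in>UNIV. y i) = b - r" and covers: "\<And>i. A i *v zh i \<le> y i"
  shows "MP_optimal c A X b r y"
proof -
  have zh: "zh i \<in> convex hull X i" for i
    using opt by (simp add: LPr_optimal_def LPr_feasible_def)
  have "(\<Sum>i\<in>UNIV. pval (c i) (A i) (X i) (y i)) \<le> LPr_cost c zh"
    unfolding LPr_cost_def by (intro sum_mono pval_le[OF K zh covers])
  moreover have "LPr_cost c zh \<le> (\<Sum>i\<in>UNIV. pval (c i) (A i) (X i) (y' i))"
    if y': "MP_feasible A X b r y'" for y'
  proof -
    have "\<forall>i. \<exists>w. w \<in> convex hull X i \<and> A i *v w \<le> y' i \<and> pval (c i) (A i) (X i) (y' i) = c i \<bullet> w"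
    proof
      fix i
      have "y' i \<in> Ydom (A i) (X i)"
        using y' by (simp add: MP_feasible_def)
      then show "\<exists>w. w \<in> convex hull X i \<and> A i *v w \<le> y' i \<and> pval (c i) (A i) (X i) (y' i) = c i \<bullet> w"
        by (rule pval_attained[OF K]) blast
    qed
    from choice[OF this] obtain w where w: "\<And>i. w i \<in> convex hull X i" "\<And>i. A i *v w i \<le> y' i"
      "\<And>i. pval (c i) (A i) (X i) (y' i) = c i \<bullet> w i"
      by blast
    have "(\<Sum>i\<in>UNIV. A i *v w i) \<le> b - r"
      using sum_mono[of UNIV "\<lambda>i. A i *v w i" y', OF w(2)] y' by (simp add: MP_feasible_def)
    then have "LPr_cost c zh \<le> LPr_cost c w"
      using opt w(1) by (simp add: LPr_optimal_def LPr_feasible_def)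
    then show ?thesis
      by (simp add: LPr_cost_def w(3))
  qed
  moreover have "MP_feasible A X b r y"
    using sum_y zh covers by (auto simp: MP_feasible_def Ydom_def)
  ultimately show ?thesis
    unfolding MP_optimal_def by (meson order_trans)
qed

section \<open>Convergence of the algorithm\<close>

locale allocation_algorithm =
  fixes c :: "'i::finite \<Rightarrow> real^'n::finite" and A :: "'i \<Rightarrow> real^'n^'s::finite"
    and X :: "'i \<Rightarrow> (real^'n) set" and b r :: "real^'s"
    and Nb :: "'i \<Rightarrow> 'i set" and \<alpha> :: "nat \<Rightarrow> real" and M :: real and zo :: "'i \<Rightarrow> real^'n"
    and y :: "'i \<Rightarrow> nat \<Rightarrow> real^'s" and z :: "'i \<Rightarrow> nat \<Rightarrow> real^'n"
    and v :: "'i \<Rightarrow> nat \<Rightarrow> real" and \<mu> :: "'i \<Rightarrow> nat \<Rightarrow> real^'s"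
  assumes compact_hull: "\<And>i. compact (convex hull X i)"
    and graph: "connected_undirected Nb"
    and step_nonneg: "\<And>t. 0 \<le> \<alpha> t" and step_not_summable: "\<not> summable \<alpha>"
    and step_sq_summable: "summable (\<lambda>t. (\<alpha> t)\<^sup>2)"
    and primal_dual: "\<And>i t. P1_primal_dual_opt (c i) (A i) (X i) M (y i t) (z i t) (v i t) (\<mu> i t)"
    and update: "\<And>i t. y i (Suc t) = y i t + \<alpha> t *\<^sub>R (\<Sum>j\<in>Nb i. \<mu> i t - \<mu> j t)"
    and init: "(\<Sum>i\<in>UNIV. y i 0) = b - r"
    and LPr_opt: "LPr_optimal c A X b r zo"
    and M_ge_1: "1 \<le> M"
    and exact_penalty: "\<And>z V. (\<forall>i. z i \<in> convex hull X i) \<Longrightarrow> 0 \<le> V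
      \<Longrightarrow> (\<Sum>i\<in>UNIV. A i *v z i) \<le> b - r + vec V \<Longrightarrow> LPr_cost c zo - (M - 1) * V \<le> LPr_cost c z"
begin

definition opt_value :: real where "opt_value = LPr_cost c zo"
definition alloc :: "nat \<Rightarrow> (real^'s)^'i" where "alloc t = (\<chi> i. y i t)"
definition multiplier :: "nat \<Rightarrow> (real^'s)^'i" where "multiplier t = (\<chi> i. \<mu> i t)"
definition multiplier_sum :: "nat \<Rightarrow> (real^'s)^'i" where
  "multiplier_sum t = (\<Sum>k<t. \<alpha> k *\<^sub>R multiplier k)"
definition slack :: "nat \<Rightarrow> real" where "slack t = (\<Sum>i\<in>UNIV. v i t)"
definition penalized_cost :: "nat \<Rightarrow> real" where
  "penalized_cost t = (\<Sum>i\<in>UNIV. c i \<bullet> z i t + M * v i t)"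

definition optimal_allocation :: "(real^'s)^'i \<Rightarrow> ('i \<Rightarrow> real^'n) \<Rightarrow> bool" where
  "optimal_allocation Y zh \<longleftrightarrow>
     (\<Sum>i\<in>UNIV. Y$i) = b - r \<and> (\<forall>i. A i *v zh i \<le> Y$i) \<and> LPr_optimal c A X b r zh"

lemma neighbours_sym: "j \<in> Nb i \<longleftrightarrow> i \<in> Nb j"
  by (rule connected_undirected_sym[OF graph])

lemma alloc_Suc: "alloc (Suc t) = alloc t + \<alpha> t *\<^sub>R laplacian Nb (multiplier t)"
  by (simp add: alloc_def multiplier_def vec_eq_iff update laplacian_nth)

lemma sum_alloc: "(\<Sum>i\<in>UNIV. y i t) = b - r"
proof (induction t)
  case (Suc t)
  have "y i (Suc t) = y i t + \<alpha> t *\<^sub>R laplacian Nb (multiplier t) $ i" for i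
    by (simp add: update laplacian_nth multiplier_def)
  then have "(\<Sum>i\<in>UNIV. y i (Suc t))
      = (\<Sum>i\<in>UNIV. y i t) + \<alpha> t *\<^sub>R (\<Sum>i\<in>UNIV. laplacian Nb (multiplier t) $ i)"
    by (simp add: sum.distrib scaleR_sum_right)
  then show ?case
    using Suc by (simp add: sum_laplacian[OF neighbours_sym])
qed (rule init)

lemma alloc_eq: "alloc t = alloc 0 + laplacian Nb (multiplier_sum t)"
proof (induction t)
  case (Suc t)
  then show ?case
    by (simp add: alloc_Suc multiplier_sum_def linear_add[OF linear_laplacian] linear_scale[OF linear_laplacian])
qed (simp add: multiplier_sum_def linear_0[OF linear_laplacian])

lemma P1_feasible: "z i t \<in> convex hull X i" "0 \<le> v i t" "A i *v z i t \<le> y i t + vec (v i t)"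
  using primal_dual[of i t] unfolding P1_primal_dual_opt_def by auto

lemma sum_constraint_le: "(\<Sum>i\<in>UNIV. A i *v z i t) \<le> b - r + vec (slack t)"
proof -
  have "(\<Sum>i\<in>UNIV. A i *v z i t) \<le> (\<Sum>i\<in>UNIV. y i t + vec (v i t))"
    by (intro sum_mono P1_feasible)
  also have "\<dots> = b - r + vec (slack t)"
    by (simp add: sum.distrib sum_alloc slack_def vec_eq_iff)
  finally show ?thesis .
qed

lemma slack_nonneg: "0 \<le> slack t"
  unfolding slack_def by (intro sum_nonneg P1_feasible)

lemma slack_le_gap: "slack t \<le> penalized_cost t - opt_value"
proof -
  have "opt_value - (M - 1) * slack t \<le> LPr_cost c (\<lambda>i. z i t)"
    unfolding opt_value_def using sum_constraint_le P1_feasible(1) slack_nonneg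
    by (intro exact_penalty) auto
  moreover have "penalized_cost t = LPr_cost c (\<lambda>i. z i t) + M * slack t"
    by (simp add: penalized_cost_def LPr_cost_def slack_def sum.distrib sum_distrib_left)
  ultimately show ?thesis
    by (simp add: algebra_simps)
qed

lemma gap_nonneg: "0 \<le> penalized_cost t - opt_value"
  using slack_le_gap[of t] slack_nonneg[of t] by linarith

lemma v_le_gap: "v i t \<le> penalized_cost t - opt_value"
proof -
  have "v i t \<le> slack t"
    unfolding slack_def using P1_feasible(2) by (intro member_le_sum) auto
  then show ?thesis
    using slack_le_gap[of t] by simp
qed

lemma cost_le_penalized_cost: "LPr_cost c (\<lambda>i. z i t) \<le> penalized_cost t"
  unfolding LPr_cost_def penalized_cost_def using P1_feasible(2) M_ge_1
  by (intro sum_mono) simp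

lemma norm_multiplier_le: "norm (multiplier t) \<le> CARD('i) * M"
proof -
  have "norm (multiplier t) \<le> (\<Sum>i\<in>UNIV. norm (\<mu> i t))"
    using norm_vec_le_sum[of "multiplier t"] by (simp add: multiplier_def)
  also have "\<dots> \<le> (\<Sum>i\<in>(UNIV::'i set). M)"
    by (intro sum_mono P1_multiplier_norm_le[OF primal_dual])
  finally show ?thesis
    by simp
qed

text \<open>Each local multiplier is a subgradient of the local value, so the multipliers point
  from any optimal allocation towards the current one.\<close>
lemma penalized_cost_le:
  assumes opt: "optimal_allocation Y zh"
  shows "penalized_cost t \<le> opt_value - multiplier t \<bullet> (alloc t - Y)"
proof -
  have zh: "zh i \<in> convex hull X i" "A i *v zh i \<le> Y$i + vec 0" for i
    using opt by (auto simp: optimal_allocation_def LPr_optimal_def LPr_feasible_def)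
  have "penalized_cost t \<le> (\<Sum>i\<in>UNIV. c i \<bullet> zh i + M * 0 + \<mu> i t \<bullet> (Y$i - y i t))"
    unfolding penalized_cost_def by (intro sum_mono P1_subgradient[OF primal_dual zh(1) _ zh(2)]) simp
  also have "\<dots> = LPr_cost c zh - multiplier t \<bullet> (alloc t - Y)"
    by (simp add: LPr_cost_def sum.distrib inner_vec_def multiplier_def alloc_def
        right_diff_distrib sum_subtractf)
  also have "LPr_cost c zh = opt_value"
    using opt LPr_opt by (auto simp: optimal_allocation_def opt_value_def LPr_optimal_def intro: antisym)
  finally show ?thesis .
qed

definition potential :: "(real^'s)^'i \<Rightarrow> nat \<Rightarrow> real" where
  "potential w t = (multiplier_sum t - w) \<bullet> laplacian Nb (multiplier_sum t - w)"

definition quad_bound :: real where "quad_bound = 2 * CARD('i) ^ 3 * M\<^sup>2"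

lemma potential_nonneg: "0 \<le> potential w t"
  unfolding potential_def by (rule inner_laplacian_self_nonneg[OF neighbours_sym])

lemma quad_bound_nonneg: "0 \<le> quad_bound"
  by (simp add: quad_bound_def)

lemma laplacian_multiplier_sum_diff:
  assumes "laplacian Nb w = Y - alloc 0"
  shows "laplacian Nb (multiplier_sum t - w) = alloc t - Y"
  using alloc_eq[of t] assms by (simp add: linear_diff[OF linear_laplacian])

lemma potential_descent:
  assumes opt: "optimal_allocation Y zh" and w: "laplacian Nb w = Y - alloc 0"
  shows "potential w (Suc t)
    \<le> potential w t - \<alpha> t * (2 * (penalized_cost t - opt_value)) + quad_bound * (\<alpha> t)\<^sup>2"
proof -
  define e where "e = multiplier_sum t - w"
  define U where "U = multiplier t"
  have e_Suc: "multiplier_sum (Suc t) - w = e + \<alpha> t *\<^sub>R U"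
    by (simp add: multiplier_sum_def e_def U_def algebra_simps)
  have Le: "laplacian Nb e = alloc t - Y"
    unfolding e_def by (rule laplacian_multiplier_sum_diff[OF w])
  have "(e + \<alpha> t *\<^sub>R U) \<bullet> laplacian Nb (e + \<alpha> t *\<^sub>R U)
      = e \<bullet> laplacian Nb e + \<alpha> t * (e \<bullet> laplacian Nb U) + \<alpha> t * (U \<bullet> laplacian Nb e)
        + (\<alpha> t)\<^sup>2 * (U \<bullet> laplacian Nb U)"
    by (simp add: linear_add[OF linear_laplacian] linear_scale[OF linear_laplacian]
        inner_add_left inner_add_right power2_eq_square algebra_simps)
  also have "e \<bullet> laplacian Nb U = U \<bullet> laplacian Nb e"
    by (rule inner_laplacian_commute[OF neighbours_sym])
  finally have expand: "potential w (Suc t)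
      = potential w t + 2 * \<alpha> t * (U \<bullet> (alloc t - Y)) + (\<alpha> t)\<^sup>2 * (U \<bullet> laplacian Nb U)"
    by (simp add: potential_def e_Suc Le e_def[symmetric])
  have "\<alpha> t * (U \<bullet> (alloc t - Y)) \<le> \<alpha> t * (opt_value - penalized_cost t)"
    using penalized_cost_le[OF opt, of t] step_nonneg[of t] unfolding U_def
    by (intro mult_left_mono) auto
  moreover have "U \<bullet> laplacian Nb U \<le> quad_bound"
  proof -
    have "U \<bullet> laplacian Nb U \<le> 2 * CARD('i) * (norm U)\<^sup>2"
      by (rule inner_laplacian_self_le_norm[OF neighbours_sym])
    also have "\<dots> \<le> 2 * CARD('i) * (CARD('i) * M)\<^sup>2"
      unfolding U_def using norm_multiplier_le by (intro mult_left_mono power_mono) auto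
    also have "\<dots> = quad_bound"
      by (simp add: quad_bound_def power_mult_distrib power2_eq_square power3_eq_cube mult_ac)
    finally show ?thesis .
  qed
  then have "(\<alpha> t)\<^sup>2 * (U \<bullet> laplacian Nb U) \<le> quad_bound * (\<alpha> t)\<^sup>2"
    using mult_left_mono[of _ quad_bound "(\<alpha> t)\<^sup>2"] by (simp add: mult.commute)
  ultimately show ?thesis
    using expand by (simp add: algebra_simps)
qed

lemma optimal_allocation_exists: "\<exists>Y. optimal_allocation Y zo"
proof -
  define excess where "excess = b - r - (\<Sum>j\<in>UNIV. A j *v zo j)"
  define Y where "Y = (\<chi> i. A i *v zo i + (1 / CARD('i)) *\<^sub>R excess)"
  have "0 \<le> excess"
    using LPr_opt by (simp add: excess_def LPr_optimal_def LPr_feasible_def)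
  then have covers: "A i *v zo i \<le> Y$i" for i
    by (simp add: Y_def less_eq_vec_def)
  have "(\<Sum>i\<in>UNIV. Y$i) = (\<Sum>i\<in>UNIV. A i *v zo i) + (\<Sum>i\<in>(UNIV::'i set). (1 / CARD('i)) *\<^sub>R excess)"
    by (simp only: Y_def vec_lambda_beta sum.distrib)
  moreover have "(\<Sum>i\<in>(UNIV::'i set). (1 / CARD('i)) *\<^sub>R excess) = excess"
    by (simp only: sum_constant_scaleR scaleR_scaleR) simp
  ultimately have "(\<Sum>i\<in>UNIV. Y$i) = b - r"
    by (simp add: excess_def)
  then show ?thesis
    using LPr_opt covers by (auto simp: optimal_allocation_def)
qed

lemma laplacian_preimage_exists:
  assumes "optimal_allocation Y zh"
  obtains w where "laplacian Nb w = Y - alloc 0"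
proof -
  have "Y - alloc 0 \<in> zero_sum"
    using assms init by (simp add: zero_sum_def optimal_allocation_def alloc_def sum_subtractf)
  then obtain w where "laplacian Nb w = Y - alloc 0"
    by (metis imageE laplacian_image_zero_sum[OF graph])
  then show ?thesis
    by (rule that)
qed

lemma alloc_dist_sq_le_potential:
  assumes "laplacian Nb w = Y - alloc 0"
  shows "(norm (alloc t - Y))\<^sup>2 \<le> 2 * CARD('i) * potential w t"
  using norm_laplacian_sq_le[OF neighbours_sym, of "multiplier_sum t - w"]
  unfolding laplacian_multiplier_sum_diff[OF assms] potential_def .

lemma potential_Suc_le:
  assumes "optimal_allocation Y zh" and "laplacian Nb w = Y - alloc 0"
  shows "potential w (Suc t) \<le> potential w t + quad_bound * (\<alpha> t)\<^sup>2"
  using potential_descent[OF assms, of t] step_nonneg[of t] gap_nonneg[of t]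
  by (smt (verit) mult_nonneg_nonneg)

lemma gap_summable: "summable (\<lambda>t. \<alpha> t * (2 * (penalized_cost t - opt_value)))"
  and alloc_bounded: "bounded (range alloc)"
proof -
  obtain Y where Y: "optimal_allocation Y zo"
    using optimal_allocation_exists by blast
  obtain w where w: "laplacian Nb w = Y - alloc 0"
    using laplacian_preimage_exists[OF Y] by blast
  note descent = descent_summable[of "potential w" \<alpha> "\<lambda>t. 2 * (penalized_cost t - opt_value)",
      OF potential_nonneg _ potential_descent[OF Y w] step_sq_summable quad_bound_nonneg]
  show "summable (\<lambda>t. \<alpha> t * (2 * (penalized_cost t - opt_value)))"
    using step_nonneg gap_nonneg by (intro descent(1)) simp
  define R where "R = sqrt (2 * CARD('i) * (potential w 0 + quad_bound * (\<Sum>t. (\<alpha> t)\<^sup>2)))"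
  have "norm (alloc t - Y) \<le> R" for t
  proof -
    have "potential w t \<le> potential w 0 + quad_bound * (\<Sum>t. (\<alpha> t)\<^sup>2)"
      using step_nonneg gap_nonneg by (intro descent(2)) simp
    then show ?thesis
      unfolding R_def using alloc_dist_sq_le_potential[OF w, of t]
      by (intro real_le_rsqrt) (simp add: order_trans)
  qed
  then have "range alloc \<subseteq> cball Y R"
    by (auto simp: dist_norm norm_minus_commute)
  then show "bounded (range alloc)"
    using bounded_cball bounded_subset by blast
qed

lemma covers_of_limit:
  assumes gap: "(\<lambda>k. penalized_cost (\<sigma> k) - opt_value) \<longlonglongrightarrow> 0"
    and Y: "(\<lambda>k. alloc (\<sigma> k)) \<longlonglongrightarrow> Y" and zh: "(\<lambda>k. z i (\<sigma> k)) \<longlonglongrightarrow> zh"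
  shows "A i *v zh \<le> Y$i"
proof -
  \<comment> \<open>the local constraint violations are bounded by the vanishing gap\<close>
  have "A i *v zh - Y$i \<in> {u. u \<le> 0}"
  proof (rule closed_sequentially[OF closed_vec_le])
    show "A i *v z i (\<sigma> k) - alloc (\<sigma> k) $ i - vec (penalized_cost (\<sigma> k) - opt_value)
        \<in> {u. u \<le> 0}" for k
    proof -
      have "(A i *v z i (\<sigma> k)) $ s \<le> y i (\<sigma> k) $ s + v i (\<sigma> k)" for s
        using P1_feasible(3)[of i "\<sigma> k"] by (simp add: less_eq_vec_def)
      then have "(A i *v z i (\<sigma> k)) $ s - y i (\<sigma> k) $ s - (penalized_cost (\<sigma> k) - opt_value) \<le> 0"
        for s
        using v_le_gap[of i "\<sigma> k"] by (smt (verit))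
      then show ?thesis
        by (simp add: less_eq_vec_def alloc_def)
    qed
    show "(\<lambda>k. A i *v z i (\<sigma> k) - alloc (\<sigma> k) $ i - vec (penalized_cost (\<sigma> k) - opt_value))
        \<longlonglongrightarrow> A i *v zh - Y$i"
      using tendsto_diff[OF tendsto_diff[OF _ tendsto_vec_nth[OF Y]]
          isCont_tendsto_compose[OF continuous_vec gap]] zh
      by (simp add: bounded_linear.tendsto[OF matrix_vector_mul_bounded_linear])
  qed
  then show ?thesis
    by (simp add: less_eq_vec_def)
qed

lemma optimal_allocation_of_limit:
  assumes F: "(\<lambda>k. penalized_cost (\<sigma> k)) \<longlonglongrightarrow> opt_value"
    and Y: "(\<lambda>k. alloc (\<sigma> k)) \<longlonglongrightarrow> Y" and zh: "\<And>i. (\<lambda>k. z i (\<sigma> k)) \<longlonglongrightarrow> zh i"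
  shows "optimal_allocation Y zh"
proof -
  have covers: "A i *v zh i \<le> Y$i" for i
    using F Y zh by (intro covers_of_limit) (simp_all add: LIM_zero)
  have hull: "zh i \<in> convex hull X i" for i
    using P1_feasible(1) by (intro closed_sequentially[OF compact_imp_closed[OF compact_hull] _ zh])
  have "(\<lambda>k. \<Sum>i\<in>UNIV. alloc (\<sigma> k) $ i) \<longlonglongrightarrow> (\<Sum>i\<in>UNIV. Y$i)"
    by (intro tendsto_sum tendsto_vec_nth Y)
  then have sum_Y: "(\<Sum>i\<in>UNIV. Y$i) = b - r"
    by (simp add: alloc_def sum_alloc LIMSEQ_const_iff)
  then have "LPr_feasible c A X b r zh"
    using hull sum_mono[of UNIV "\<lambda>i. A i *v zh i" "\<lambda>i. Y$i", OF covers]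
    by (simp add: LPr_feasible_def)
  moreover have "LPr_cost c zh \<le> opt_value"
  proof (rule tendsto_le[OF _ F])
    show "(\<lambda>k. LPr_cost c (\<lambda>i. z i (\<sigma> k))) \<longlonglongrightarrow> LPr_cost c zh"
      unfolding LPr_cost_def by (intro tendsto_intros zh)
    show "\<forall>\<^sub>F k in sequentially. LPr_cost c (\<lambda>i. z i (\<sigma> k)) \<le> penalized_cost (\<sigma> k)"
      by (simp add: cost_le_penalized_cost)
  qed simp
  ultimately have "LPr_optimal c A X b r zh"
    using LPr_opt by (auto simp: LPr_optimal_def opt_value_def)
  then show ?thesis
    using sum_Y covers by (simp add: optimal_allocation_def)
qed

lemma optimal_cluster_point:
  obtains \<sigma> Y zh where "strict_mono \<sigma>" "optimal_allocation Y zh" "(\<lambda>k. alloc (\<sigma> k)) \<longlonglongrightarrow> Y"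
proof -
  obtain \<tau> where \<tau>: "strict_mono \<tau>" and gap: "(\<lambda>k. 2 * (penalized_cost (\<tau> k) - opt_value)) \<longlonglongrightarrow> 0"
  proof (rule weighted_summable_imp_subseq_tendsto_0[OF step_nonneg step_not_summable gap_summable])
    show "0 \<le> 2 * (penalized_cost t - opt_value)" for t
      using gap_nonneg[of t] by simp
  qed
  define f where "f k = (alloc (\<tau> k), \<chi> i. z i (\<tau> k))" for k
  have "bounded (range alloc \<times> {Z. \<forall>i. Z$i \<in> convex hull X i})"
    by (intro bounded_Times alloc_bounded bounded_vec_Pi compact_imp_bounded compact_hull)
  then have "bounded (range f)"
    by (rule bounded_subset) (use P1_feasible(1) in \<open>auto simp: f_def\<close>)
  then obtain l \<rho> where \<rho>: "strict_mono \<rho>" and lim: "(f \<circ> \<rho>) \<longlonglongrightarrow> l"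
    using bounded_imp_convergent_subsequence by blast
  define \<sigma> where "\<sigma> = \<tau> \<circ> \<rho>"
  have "(\<lambda>k. alloc (\<sigma> k)) \<longlonglongrightarrow> fst l"
    using tendsto_fst[OF lim] by (simp add: \<sigma>_def f_def o_def)
  moreover have "(\<lambda>k. z i (\<sigma> k)) \<longlonglongrightarrow> snd l $ i" for i
    using tendsto_vec_nth[OF tendsto_snd[OF lim], of i] by (simp add: \<sigma>_def f_def o_def)
  moreover have "(\<lambda>k. penalized_cost (\<sigma> k)) \<longlonglongrightarrow> opt_value"
    using tendsto_mult_left[OF LIMSEQ_subseq_LIMSEQ[OF gap \<rho>], of "1/2"]
    by (simp add: \<sigma>_def o_def LIM_zero_iff)
  ultimately have "optimal_allocation (fst l) (\<lambda>i. snd l $ i)"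
    by (intro optimal_allocation_of_limit)
  then show ?thesis
    using that[of \<sigma>] \<open>(\<lambda>k. alloc (\<sigma> k)) \<longlonglongrightarrow> fst l\<close> \<tau> \<rho> by (simp add: \<sigma>_def strict_mono_o)
qed

text \<open>The potential vanishes along the cluster subsequence and grows only by summable
  amounts, so it vanishes; it dominates the squared distance to the cluster point.\<close>
lemma alloc_tendsto_optimal: "\<exists>Y zh. optimal_allocation Y zh \<and> alloc \<longlonglongrightarrow> Y"
proof -
  obtain \<sigma> Y zh where \<sigma>: "strict_mono \<sigma>" and opt: "optimal_allocation Y zh"
    and lim: "(\<lambda>k. alloc (\<sigma> k)) \<longlonglongrightarrow> Y"
    by (rule optimal_cluster_point)
  obtain w where w: "laplacian Nb w = Y - alloc 0"
    using laplacian_preimage_exists[OF opt] by blast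
  obtain C where C: "\<And>e::(real^'s)^'i. e \<bullet> laplacian Nb e \<le> C * (norm (laplacian Nb e))\<^sup>2"
    using inner_laplacian_self_le_norm_laplacian[OF graph] by blast
  have pot_le: "potential w t \<le> C * (norm (alloc t - Y))\<^sup>2" for t
    using C[of "multiplier_sum t - w"] unfolding potential_def laplacian_multiplier_sum_diff[OF w] .
  have sub: "(\<lambda>k. potential w (\<sigma> k)) \<longlonglongrightarrow> 0"
  proof (rule tendsto_sandwich[of "\<lambda>_. 0" _ sequentially "\<lambda>k. C * (norm (alloc (\<sigma> k) - Y))\<^sup>2"])
    show "\<forall>\<^sub>F k in sequentially. potential w (\<sigma> k) \<le> C * (norm (alloc (\<sigma> k) - Y))\<^sup>2"
      using pot_le by simp
    show "(\<lambda>k. C * (norm (alloc (\<sigma> k) - Y))\<^sup>2) \<longlonglongrightarrow> 0"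
      using tendsto_mult_left[OF tendsto_power[OF tendsto_norm_zero[OF LIM_zero[OF lim]], of 2], of C]
      by simp
  qed (simp_all add: potential_nonneg)
  have pot: "potential w \<longlonglongrightarrow> 0"
  proof (rule tendsto_0_if_subseq_and_summable_increments
      [OF potential_nonneg potential_Suc_le[OF opt w] _ _ \<sigma> sub])
    show "0 \<le> quad_bound * (\<alpha> t)\<^sup>2" for t
      using quad_bound_nonneg by simp
    show "summable (\<lambda>t. quad_bound * (\<alpha> t)\<^sup>2)"
      using step_sq_summable by (rule summable_mult)
  qed
  have "(\<lambda>t. norm (alloc t - Y)) \<longlonglongrightarrow> 0"
  proof (rule tendsto_sandwich[of "\<lambda>_. 0" _ sequentially "\<lambda>t. sqrt (2 * CARD('i) * potential w t)"])
    show "\<forall>\<^sub>F t in sequentially. norm (alloc t - Y) \<le> sqrt (2 * CARD('i) * potential w t)"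
      using alloc_dist_sq_le_potential[OF w] by (simp add: real_le_rsqrt)
    show "(\<lambda>t. sqrt (2 * CARD('i) * potential w t)) \<longlonglongrightarrow> 0"
      using tendsto_real_sqrt[OF tendsto_mult_left[OF pot, of "2 * CARD('i)"]] by simp
  qed simp_all
  then show ?thesis
    using opt by (auto simp: tendsto_norm_zero_iff LIM_zero_iff)
qed

lemma penalized_cost_tendsto:
  assumes opt: "optimal_allocation Y zh" and lim: "alloc \<longlonglongrightarrow> Y"
  shows "penalized_cost \<longlonglongrightarrow> opt_value"
proof (rule tendsto_sandwich
    [of "\<lambda>_. opt_value" _ sequentially "\<lambda>t. opt_value + CARD('i) * M * norm (alloc t - Y)"])
  have "penalized_cost t \<le> opt_value + CARD('i) * M * norm (alloc t - Y)" for t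
  proof -
    have "- (multiplier t \<bullet> (alloc t - Y)) \<le> norm (multiplier t) * norm (alloc t - Y)"
      using Cauchy_Schwarz_ineq2[of "multiplier t" "alloc t - Y"] by linarith
    also have "\<dots> \<le> CARD('i) * M * norm (alloc t - Y)"
      using norm_multiplier_le by (intro mult_right_mono) auto
    finally show ?thesis
      using penalized_cost_le[OF opt, of t] by simp
  qed
  then show "\<forall>\<^sub>F t in sequentially. penalized_cost t \<le> opt_value + CARD('i) * M * norm (alloc t - Y)"
    by simp
  show "(\<lambda>t. opt_value + CARD('i) * M * norm (alloc t - Y)) \<longlonglongrightarrow> opt_value"
    using tendsto_add[OF tendsto_const tendsto_mult_left[OF tendsto_norm[OF LIM_zero[OF lim]]]]
    by simp
qed (use gap_nonneg in simp_all)

theorem convergence: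
  "(\<forall>t. (\<Sum>i\<in>UNIV. y i t) = b - r) \<and>
   (\<exists>ystar. MP_optimal c A X b r ystar \<and> (\<forall>i. (\<lambda>t. norm (y i t - ystar i)) \<longlonglongrightarrow> 0)) \<and>
   (\<forall>zinf \<sigma>. strict_mono \<sigma> \<and> (\<forall>i. (\<lambda>t. z i (\<sigma> t)) \<longlonglongrightarrow> zinf i) \<longrightarrow>
      LPr_optimal c A X b r zinf \<and> LPr_cost c zinf = LPr_value c A X b r)"
proof (intro conjI allI impI)
  show "(\<Sum>i\<in>UNIV. y i t) = b - r" for t
    by (rule sum_alloc)
  obtain Y zh where opt: "optimal_allocation Y zh" and lim: "alloc \<longlonglongrightarrow> Y"
    using alloc_tendsto_optimal by blast
  have "MP_optimal c A X b r (\<lambda>i. Y$i)"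
    using opt by (intro MP_optimal_if_covers_LPr_optimum compact_hull) (auto simp: optimal_allocation_def)
  moreover have "(\<lambda>t. norm (y i t - Y$i)) \<longlonglongrightarrow> 0" for i
    using tendsto_norm[OF LIM_zero[OF tendsto_vec_nth[OF lim, of i]]] by (simp add: alloc_def)
  ultimately show "\<exists>ystar. MP_optimal c A X b r ystar \<and> (\<forall>i. (\<lambda>t. norm (y i t - ystar i)) \<longlonglongrightarrow> 0)"
    by blast
  fix zinf \<sigma> assume "strict_mono \<sigma> \<and> (\<forall>i. (\<lambda>t. z i (\<sigma> t)) \<longlonglongrightarrow> zinf i)"
  then have \<sigma>: "strict_mono \<sigma>" and zinf: "\<And>i. (\<lambda>t. z i (\<sigma> t)) \<longlonglongrightarrow> zinf i"
    by auto
  have "(\<lambda>k. penalized_cost (\<sigma> k)) \<longlonglongrightarrow> opt_value"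
    using LIMSEQ_subseq_LIMSEQ[OF penalized_cost_tendsto[OF opt lim] \<sigma>] by (simp add: o_def)
  moreover have "(\<lambda>k. alloc (\<sigma> k)) \<longlonglongrightarrow> Y"
    using LIMSEQ_subseq_LIMSEQ[OF lim \<sigma>] by (simp add: o_def)
  ultimately have "optimal_allocation Y zinf"
    using zinf by (rule optimal_allocation_of_limit)
  then show "LPr_optimal c A X b r zinf"
    by (simp add: optimal_allocation_def)
  then show "LPr_cost c zinf = LPr_value c A X b r"
    by (simp add: LPr_value_eq)
qed

end

theorem proposition1:
  fixes c :: "'i::finite \<Rightarrow> real^'n::finite"
    and A :: "'i \<Rightarrow> real^'n^'s::finite"
    and D :: "'i \<Rightarrow> real^'n^'m::finite"
    and d :: "'i \<Rightarrow> real^'m"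
    and Zc :: "'i \<Rightarrow> 'n set"
    and b r :: "real^'s"
    and Nb :: "'i \<Rightarrow> 'i set"
    and \<alpha> :: "nat \<Rightarrow> real"
    and y0 :: "'i \<Rightarrow> real^'s"
  assumes X_nonempty: "\<And>i. mip_set (Zc i) (D i) (d i) \<noteq> {}"
    and X_compact: "\<And>i. compact (mip_set (Zc i) (D i) (d i))"
    and r_nonneg: "r \<ge> 0"
    and assmA: "\<exists>!z. LPr_optimal c A (\<lambda>i. mip_set (Zc i) (D i) (d i)) b r z"
    and assmB: "\<And>t. \<alpha> t \<ge> 0" "\<not> summable \<alpha>" "summable (\<lambda>t. (\<alpha> t)\<^sup>2)"
    and graph: "connected_undirected Nb"
    and init: "(\<Sum>i\<in>UNIV. y0 i) = b - r"
  shows "\<exists>M>0. \<forall>(y :: 'i \<Rightarrow> nat \<Rightarrow> real^'s) (z :: 'i \<Rightarrow> nat \<Rightarrow> real^'n)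
            (v :: 'i \<Rightarrow> nat \<Rightarrow> real) (\<mu> :: 'i \<Rightarrow> nat \<Rightarrow> real^'s).
      (\<forall>i. y i 0 = y0 i) \<and>
      (\<forall>i t. P1_primal_dual_opt (c i) (A i) (mip_set (Zc i) (D i) (d i)) M (y i t)
               (z i t) (v i t) (\<mu> i t)) \<and>
      (\<forall>i t. y i (Suc t) = y i t + \<alpha> t *\<^sub>R (\<Sum>j\<in>Nb i. \<mu> i t - \<mu> j t))
      \<longrightarrow>
      (\<forall>t. (\<Sum>i\<in>UNIV. y i t) = b - r) \<and>
      (\<exists>ystar. MP_optimal c A (\<lambda>i. mip_set (Zc i) (D i) (d i)) b r ystar \<and>
         (\<forall>i. (\<lambda>t. norm (y i t - ystar i)) \<longlonglongrightarrow> 0)) \<and>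
      (\<forall>zinf \<sigma>. strict_mono \<sigma> \<and> (\<forall>i. (\<lambda>t. z i (\<sigma> t)) \<longlonglongrightarrow> zinf i) \<longrightarrow>
         LPr_optimal c A (\<lambda>i. mip_set (Zc i) (D i) (d i)) b r zinf \<and>
         LPr_cost c zinf = LPr_value c A (\<lambda>i. mip_set (Zc i) (D i) (d i)) b r)"
proof -
  let ?X = "\<lambda>i. mip_set (Zc i) (D i) (d i)"
  obtain zo where zo: "LPr_optimal c A ?X b r zo"
    using assmA by blast
  obtain \<Lambda> where "0 \<le> \<Lambda>" and penalty: "\<And>z V. (\<forall>i. z i \<in> convex hull ?X i) \<Longrightarrow> 0 \<le> V
      \<Longrightarrow> (\<Sum>i\<in>UNIV. A i *v z i) \<le> b - r + vec V \<Longrightarrow> LPr_cost c zo - \<Lambda> * V \<le> LPr_cost c z"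
    using LPr_exact_penalty[OF polytope_convex_hull_mip_set[OF X_compact] zo] by blast
  have alg: "allocation_algorithm c A ?X b r Nb \<alpha> (\<Lambda> + 1) zo y z v \<mu>"
    if "(\<forall>i. y i 0 = y0 i) \<and>
      (\<forall>i t. P1_primal_dual_opt (c i) (A i) (?X i) (\<Lambda> + 1) (y i t) (z i t) (v i t) (\<mu> i t)) \<and>
      (\<forall>i t. y i (Suc t) = y i t + \<alpha> t *\<^sub>R (\<Sum>j\<in>Nb i. \<mu> i t - \<mu> j t))" for y z v \<mu>
    using that init X_compact assmB graph zo \<open>0 \<le> \<Lambda>\<close> penalty
    by unfold_locales (simp_all add: compact_convex_hull)
  show ?thesis
  proof (rule exI[of _ "\<Lambda> + 1"], rule conjI)
    show "0 < \<Lambda> + 1"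
      using \<open>0 \<le> \<Lambda>\<close> by simp
  qed (intro allI impI, rule allocation_algorithm.convergence[OF alg], assumption)
qed

end
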